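(* Assume $M$ is projective in $\sigma[M]$ and let $X\in\sigma[M]$. (i) If $P\subsetneq X$ is an $M$-prime submodule of $X$, then $X/P$ is an $M$-prime module. (ii) For an $M$-ideal $P\subsetneq M$, the following are equivalent: (1) $P$ is a prime $M$-ideal; (2) $P$ is an $M$-prime submodule of $M$; (3) $M/P$ is an $M$-prime module.
   Context: $R$ is a ring with identity, modules are unital left $R$-modules, $M$ is a fixed left $R$-module. $\sigma[M]$ is the full subcategory of $R$-modules isomorphic to submodules of $M$-generated modules. $\mathrm{Ann}_M(X):=\bigcap_{f\in\mathrm{Hom}_R(M,X)}\ker f$. For $N\le M$ and a module $X$, $N\cdot X$ is the intersection of the kernels of all homomorphisms $X\to W$ where $W$ ranges over modules with $f(N)=0$ for all $f\in\mathrm{Hom}_R(M,W)$ (for $Y\le X$, $N\cdot Y$ is formed regarding $Y$ as a module). A submodule $N\le M$ is an $M$-ideal if $N$ is the intersection of the kernels of all homomorphisms from $M$ into modules of some class $\mathcal C$. A proper submodule $P$ of $X$ is $M$-prime if for all $N\le M$, $Y\le X$, $N\cdot Y\subseteq P$ implies $N\cdot X\subseteq P$ or $Y\subseteq P$; $X$ is an $M$-prime module if $X\ne0$ and $(0)$ is $M$-prime in $X$. A proper $M$-ideal $P$ is a prime $M$-ideal if $P=\mathrm{Ann}_M(X)$ for some $M$-prime module $X$. *)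

theory Defs
  imports Main
begin

text \<open>The ring R is the type 'r
  (any type of sort ring + monoid_mult, i.e. an associative ring with 1, possibly
  non-commutative and possibly the zero ring).  A module is a carrier set inside
  some type 'a with addition, zero and scalar multiplication.\<close>

record ('r, 'a) lmodule =
  mcar :: "'a set"
  madd :: "'a \<Rightarrow> 'a \<Rightarrow> 'a"
  mzero :: "'a"
  msmult :: "'r \<Rightarrow> 'a \<Rightarrow> 'a"

definition is_lmodule :: "('r::{ring,monoid_mult}, 'a) lmodule \<Rightarrow> bool" where
  "is_lmodule X \<longleftrightarrow>
     mzero X \<in> mcar X \<and>
     (\<forall>x\<in>mcar X. \<forall>y\<in>mcar X. madd X x y \<in> mcar X) \<and>
     (\<forall>r. \<forall>x\<in>mcar X. msmult X r x \<in> mcar X) \<and>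
     (\<forall>x\<in>mcar X. \<forall>y\<in>mcar X. \<forall>z\<in>mcar X. madd X (madd X x y) z = madd X x (madd X y z)) \<and>
     (\<forall>x\<in>mcar X. \<forall>y\<in>mcar X. madd X x y = madd X y x) \<and>
     (\<forall>x\<in>mcar X. madd X (mzero X) x = x) \<and>
     (\<forall>x\<in>mcar X. \<exists>y\<in>mcar X. madd X x y = mzero X) \<and>
     (\<forall>r. \<forall>x\<in>mcar X. \<forall>y\<in>mcar X. msmult X r (madd X x y) = madd X (msmult X r x) (msmult X r y)) \<and>
     (\<forall>r s. \<forall>x\<in>mcar X. msmult X (r + s) x = madd X (msmult X r x) (msmult X s x)) \<and>
     (\<forall>r s. \<forall>x\<in>mcar X. msmult X (r * s) x = msmult X r (msmult X s x)) \<and>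
     (\<forall>x\<in>mcar X. msmult X 1 x = x)"

definition submod :: "('r::{ring,monoid_mult}, 'a) lmodule \<Rightarrow> 'a set \<Rightarrow> bool" where
  "submod X N \<longleftrightarrow> N \<subseteq> mcar X \<and> mzero X \<in> N \<and>
     (\<forall>x\<in>N. \<forall>y\<in>N. madd X x y \<in> N) \<and> (\<forall>r. \<forall>x\<in>N. msmult X r x \<in> N)"

definition subm :: "('r, 'a) lmodule \<Rightarrow> 'a set \<Rightarrow> ('r, 'a) lmodule" where
  "subm X N = X\<lparr>mcar := N\<rparr>"

definition span :: "('r::{ring,monoid_mult}, 'a) lmodule \<Rightarrow> 'a set \<Rightarrow> 'a set" where
  "span X S = \<Inter>{N. submod X N \<and> S \<subseteq> N}"

definition hom :: "('r, 'a) lmodule \<Rightarrow> ('r, 'b) lmodule \<Rightarrow> ('a \<Rightarrow> 'b) \<Rightarrow> bool" where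
  "hom X Y f \<longleftrightarrow> (\<forall>x\<in>mcar X. f x \<in> mcar Y) \<and>
     (\<forall>x\<in>mcar X. \<forall>y\<in>mcar X. f (madd X x y) = madd Y (f x) (f y)) \<and>
     (\<forall>r. \<forall>x\<in>mcar X. f (msmult X r x) = msmult Y r (f x))"

definition coset :: "('r, 'a) lmodule \<Rightarrow> 'a set \<Rightarrow> 'a \<Rightarrow> 'a set" where
  "coset X P x = {madd X x p | p. p \<in> P}"

definition quot :: "('r, 'a) lmodule \<Rightarrow> 'a set \<Rightarrow> ('r, 'a set) lmodule" where
  "quot X P = \<lparr> mcar = coset X P ` mcar X,
                 madd = (\<lambda>A B. coset X P (madd X (SOME a. a \<in> A) (SOME b. b \<in> B))),
                 mzero = P,
                 msmult = (\<lambda>r A. coset X P (msmult X r (SOME a. a \<in> A))) \<rparr>"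

definition Ann :: "('r, 'm) lmodule \<Rightarrow> ('r, 'x) lmodule \<Rightarrow> 'm set" where
  "Ann M X = {m \<in> mcar M. \<forall>f. hom M X f \<longrightarrow> f m = mzero X}"

definition kills :: "('r, 'm) lmodule \<Rightarrow> 'm set \<Rightarrow> ('r, 'w) lmodule \<Rightarrow> bool" where
  "kills M N W \<longleftrightarrow> (\<forall>f. hom M W f \<longrightarrow> (\<forall>n\<in>N. f n = mzero W))"

text \<open>W ranges over modules whose carrier lies in the type of X; this is
  no restriction, since each kernel only depends on the image g(X), which has
  cardinality at most that of X and can be transported into that type.\<close>
definition mprod :: "('r::{ring,monoid_mult}, 'm) lmodule \<Rightarrow> 'm set \<Rightarrow> ('r, 'x) lmodule \<Rightarrow> 'x set" where
  "mprod M N X = {x \<in> mcar X. \<forall>(W :: ('r, 'x) lmodule) g.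
       is_lmodule W \<and> kills M N W \<and> hom X W g \<longrightarrow> g x = mzero W}"

text \<open>M-ideals: intersections of kernels of all homomorphisms from M into the modules
  of some class C (again, modules with carrier in the type of M suffice, since only
  the images f(M) matter).\<close>
definition Mideal :: "('r::{ring,monoid_mult}, 'm) lmodule \<Rightarrow> 'm set \<Rightarrow> bool" where
  "Mideal M N \<longleftrightarrow> (\<exists>C :: ('r, 'm) lmodule set. (\<forall>W\<in>C. is_lmodule W) \<and>
       N = {m \<in> mcar M. \<forall>W\<in>C. \<forall>f. hom M W f \<longrightarrow> f m = mzero W})"

definition Mprime_sub :: "('r::{ring,monoid_mult}, 'm) lmodule \<Rightarrow> ('r, 'x) lmodule \<Rightarrow> 'x set \<Rightarrow> bool" where
  "Mprime_sub M X P \<longleftrightarrow> submod X P \<and> P \<noteq> mcar X \<and>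
     (\<forall>N Y. submod M N \<longrightarrow> submod X Y \<longrightarrow> mprod M N (subm X Y) \<subseteq> P \<longrightarrow>
        mprod M N X \<subseteq> P \<or> Y \<subseteq> P)"

definition Mprime_module :: "('r::{ring,monoid_mult}, 'm) lmodule \<Rightarrow> ('r, 'x) lmodule \<Rightarrow> bool" where
  "Mprime_module M X \<longleftrightarrow> mcar X \<noteq> {mzero X} \<and> Mprime_sub M X {mzero X}"

text \<open>Prime M-ideal, witnessed by an M-prime module whose carrier lies in the type 'x.\<close>
definition prime_Mideal :: "'x itself \<Rightarrow> ('r::{ring,monoid_mult}, 'm) lmodule \<Rightarrow> 'm set \<Rightarrow> bool" where
  "prime_Mideal _ M P \<longleftrightarrow> Mideal M P \<and> P \<noteq> mcar M \<and>
     (\<exists>X :: ('r, 'x) lmodule. is_lmodule X \<and> Mprime_module M X \<and> P = Ann M X)"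

definition Mgenerated :: "('r::{ring,monoid_mult}, 'm) lmodule \<Rightarrow> ('r, 'y) lmodule \<Rightarrow> bool" where
  "Mgenerated M Y \<longleftrightarrow> mcar Y = span Y (\<Union>{f ` mcar M | f. hom M Y f})"

text \<open>X \<in> \<sigma>[M]: X embeds into an M-generated module.  The M-generated module can be
  chosen of cardinality at most |X|*|M|*aleph_0, so carriers in the type ('x * 'm) list
  suffice.\<close>
definition in_sigma :: "('r::{ring,monoid_mult}, 'm) lmodule \<Rightarrow> ('r, 'x) lmodule \<Rightarrow> bool" where
  "in_sigma M X \<longleftrightarrow> (\<exists>(Y :: ('r, ('x \<times> 'm) list) lmodule) h.
      is_lmodule Y \<and> Mgenerated M Y \<and> hom X Y h \<and> inj_on h (mcar X))"

text \<open>M projective in \<sigma>[M].  Modules with carrier in ('r * 'm) list suffice: any lifting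
  problem reduces to one between modules of cardinality at most |R|*|M|*aleph_0.\<close>
definition proj_sigma :: "('r::{ring,monoid_mult}, 'm) lmodule \<Rightarrow> bool" where
  "proj_sigma M \<longleftrightarrow> (\<forall>(A :: ('r, ('r \<times> 'm) list) lmodule) (B :: ('r, ('r \<times> 'm) list) lmodule) g f.
      is_lmodule A \<and> is_lmodule B \<and> in_sigma M A \<and> in_sigma M B \<and>
      hom A B g \<and> g ` mcar A = mcar B \<and> hom M B f \<longrightarrow>
      (\<exists>h. hom M A h \<and> (\<forall>m\<in>mcar M. g (h m) = f m)))"

end

theory Submission
  imports Defs
begin

(* The product N.X is handled through annihilation: N.X = 0 iff every hom M -> X
   vanishes on N ("N kills X"), and every hom from X into a module killed by N vanishes
   on N.X (lemma mprod_kernel).  Projectivity enters only through the lifting lemma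
   "lift": f : M -> B lifts along g : A -> B whenever A is in sigma[M] and f(M) is
   contained in g(A).  With lifting, N.Y <= P for a submodule Y of X corresponds to N killing
   the image of Y in X/P (quot_kills_image, quot_mprod_preimage); this yields
   "P M-prime in X <==> X/P M-prime" for every X in sigma[M] (Mprime_quot,
   Mprime_of_quot), which gives (i) and (2) <==> (3).  For (1) ==> (2) the same argument
   is run for f(Y) inside an M-prime module (Mprime_sub_Ann), and (3) ==> (1) follows
   from Ann_M(M/P) = P (Ann_quot_Mideal). *)

section \<open>Elementary module theory\<close>

context
  fixes X :: "('r::{ring,monoid_mult}, 'a) lmodule"
  assumes lm: "is_lmodule X"
begin

lemma lm_zero [simp, intro]: "mzero X \<in> mcar X"
  using lm by (simp add: is_lmodule_def)

lemma lm_add [simp, intro]: "x \<in> mcar X \<Longrightarrow> y \<in> mcar X \<Longrightarrow> madd X x y \<in> mcar X"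
  using lm by (simp add: is_lmodule_def)

lemma lm_smult [simp, intro]: "x \<in> mcar X \<Longrightarrow> msmult X r x \<in> mcar X"
  using lm by (simp add: is_lmodule_def)

lemma lm_lzero [simp]: "x \<in> mcar X \<Longrightarrow> madd X (mzero X) x = x"
  using lm unfolding is_lmodule_def by blast

lemma lm_one [simp]: "x \<in> mcar X \<Longrightarrow> msmult X 1 x = x"
  using lm by (simp add: is_lmodule_def)

lemma lm_inv: "x \<in> mcar X \<Longrightarrow> \<exists>y\<in>mcar X. madd X x y = mzero X"
  using lm unfolding is_lmodule_def by blast

lemma lm_assoc: "\<lbrakk>x \<in> mcar X; y \<in> mcar X; z \<in> mcar X\<rbrakk> \<Longrightarrow>
    madd X (madd X x y) z = madd X x (madd X y z)"
  and lm_comm: "\<lbrakk>x \<in> mcar X; y \<in> mcar X\<rbrakk> \<Longrightarrow> madd X x y = madd X y x"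
  and lm_sdist: "\<lbrakk>x \<in> mcar X; y \<in> mcar X\<rbrakk> \<Longrightarrow>
    msmult X r (madd X x y) = madd X (msmult X r x) (msmult X r y)"
  and lm_adist: "x \<in> mcar X \<Longrightarrow> msmult X (r + s) x = madd X (msmult X r x) (msmult X s x)"
  and lm_smassoc: "x \<in> mcar X \<Longrightarrow> msmult X (r * s) x = msmult X r (msmult X s x)"
  using lm unfolding is_lmodule_def by blast+

lemma lm_rzero [simp]: "x \<in> mcar X \<Longrightarrow> madd X x (mzero X) = x"
  using lm_comm[of x "mzero X"] by simp

text \<open>The only idempotent of the additive group is zero; this gives the usual
  zero laws for scalar multiplication.\<close>
lemma lm_idem:
  assumes a: "a \<in> mcar X" and aa: "madd X a a = a"
  shows "a = mzero X"
proof -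
  obtain b where b: "b \<in> mcar X" "madd X a b = mzero X" using lm_inv a by blast
  have "a = madd X a (madd X a b)" using a b by simp
  also have "\<dots> = madd X (madd X a a) b" using a b by (simp add: lm_assoc)
  also have "\<dots> = mzero X" using aa b by simp
  finally show ?thesis .
qed

lemma lm_smult0 [simp]: "msmult X r (mzero X) = mzero X"
  using lm_idem[of "msmult X r (mzero X)"] lm_sdist[of "mzero X" "mzero X" r] by simp

lemma lm_swap:
  assumes "x \<in> mcar X" "p \<in> mcar X" "y \<in> mcar X" "q \<in> mcar X"
  shows "madd X (madd X x p) (madd X y q) = madd X (madd X x y) (madd X p q)"
proof -
  have "madd X p (madd X y q) = madd X y (madd X p q)"
    using assms lm_comm[of p y] by (simp add: lm_assoc[symmetric])
  then show ?thesis using assms by (simp add: lm_assoc)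
qed

lemma lm_neg: "x \<in> mcar X \<Longrightarrow> madd X x (msmult X (-1) x) = mzero X"
  using lm_adist[of x 1 "-1"] lm_idem[of "msmult X 0 x"] lm_adist[of x 0 0] by simp

end

section \<open>Finite sums and generated submodules\<close>

text \<open>When the family is closed under scalars this is the submodule
  generated by the family; it replaces the abstract span by explicit
  representations.\<close>

definition msum :: "('r, 'a) lmodule \<Rightarrow> 'a list \<Rightarrow> 'a" where
  "msum X xs = foldr (madd X) xs (mzero X)"

definition sums :: "('r, 'a) lmodule \<Rightarrow> ('i \<Rightarrow> 'a) \<Rightarrow> 'i set \<Rightarrow> 'a set" where
  "sums X u I = {msum X (map u l) | l. set l \<subseteq> I}"

lemma msum_Nil [simp]: "msum X [] = mzero X"
  and msum_Cons [simp]: "msum X (x # xs) = madd X x (msum X xs)"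
  by (simp_all add: msum_def)

context
  fixes X :: "('r::{ring,monoid_mult}, 'a) lmodule"
  assumes lm: "is_lmodule X"
begin

lemma msum_in [intro]: "set xs \<subseteq> mcar X \<Longrightarrow> msum X xs \<in> mcar X"
  by (induction xs) (auto simp: lm)

lemma msum_append: "\<lbrakk>set xs \<subseteq> mcar X; set ys \<subseteq> mcar X\<rbrakk> \<Longrightarrow>
    msum X (xs @ ys) = madd X (msum X xs) (msum X ys)"
  by (induction xs) (auto simp: lm lm_assoc[OF lm] msum_in)

lemma msum_smult: "set xs \<subseteq> mcar X \<Longrightarrow> msmult X r (msum X xs) = msum X (map (msmult X r) xs)"
  by (induction xs) (auto simp: lm lm_sdist[OF lm] msum_in)

lemma sums_mem: "\<lbrakk>i \<in> I; u i \<in> mcar X\<rbrakk> \<Longrightarrow> u i \<in> sums X u I"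
  unfolding sums_def by (intro CollectI exI[of _ "[i]"]) (simp add: lm)

lemma sums_submod:
  assumes u: "u ` I \<subseteq> mcar X"
    and scal: "\<And>r i. i \<in> I \<Longrightarrow> \<exists>j\<in>I. u j = msmult X r (u i)"
  shows "submod X (sums X u I)"
proof -
  have in_X: "set (map u l) \<subseteq> mcar X" if "set l \<subseteq> I" for l
    using that u by auto
  have add: "madd X a b \<in> sums X u I" if ab: "a \<in> sums X u I" "b \<in> sums X u I" for a b
  proof -
    obtain l k where l: "set l \<subseteq> I" "a = msum X (map u l)"
      and k: "set k \<subseteq> I" "b = msum X (map u k)"
      using ab unfolding sums_def by blast
    have "madd X a b = msum X (map u (l @ k))"
      using msum_append[OF in_X[OF l(1)] in_X[OF k(1)]] l k by simp
    then show ?thesis using l k unfolding sums_def by (intro CollectI exI[of _ "l @ k"]) auto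
  qed
  have smult: "msmult X r a \<in> sums X u I" if a: "a \<in> sums X u I" for r a
  proof -
    obtain l where l: "set l \<subseteq> I" "a = msum X (map u l)"
      using a unfolding sums_def by blast
    define j where "j i = (SOME j. j \<in> I \<and> u j = msmult X r (u i))" for i
    have j: "j i \<in> I \<and> u (j i) = msmult X r (u i)" if "i \<in> I" for i
      unfolding j_def using someI_ex[OF scal[OF that, of r, unfolded Bex_def]] .
    have "msmult X r a = msum X (map (msmult X r) (map u l))"
      using msum_smult[OF in_X[OF l(1)]] l(2) by simp
    also have "map (msmult X r) (map u l) = map u (map j l)"
      using l(1) j by auto
    finally have "msmult X r a = msum X (map u (map j l))" .
    moreover have "set (map j l) \<subseteq> I" using l j by auto
    ultimately show ?thesis unfolding sums_def by blast
  qed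
  have "sums X u I \<subseteq> mcar X" unfolding sums_def using in_X msum_in by blast
  moreover have "mzero X \<in> sums X u I" unfolding sums_def by (intro CollectI exI[of _ "[]"]) simp
  ultimately show ?thesis unfolding submod_def using add smult by blast
qed

end

lemma msum_submod: "\<lbrakk>submod X N; set xs \<subseteq> N\<rbrakk> \<Longrightarrow> msum X xs \<in> N"
  by (induction xs) (auto simp: submod_def)

lemma sums_least: "\<lbrakk>submod X N; u ` I \<subseteq> N\<rbrakk> \<Longrightarrow> sums X u I \<subseteq> N"
  unfolding sums_def by (fastforce intro!: msum_submod)

lemma span_least: "submod X N \<Longrightarrow> S \<subseteq> N \<Longrightarrow> span X S \<subseteq> N"
  unfolding span_def by blast

lemma sums_span: "sums X u I \<subseteq> span X (u ` I)"
  unfolding span_def using sums_least by blast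

lemma sums_reindex:
  assumes "\<And>i. i \<in> I \<Longrightarrow> k i \<in> J \<and> v (k i) = u i"
  shows "sums X u I \<subseteq> sums X v J"
proof
  fix x assume "x \<in> sums X u I"
  then obtain l where l: "set l \<subseteq> I" "x = msum X (map u l)" unfolding sums_def by blast
  then have "map u l = map v (map k l)" "set (map k l) \<subseteq> J" using assms by auto
  then show "x \<in> sums X v J" using l(2) unfolding sums_def by (metis (mono_tags, lifting) mem_Collect_eq)
qed

lemma sums_inj_list:
  fixes u :: "'i \<Rightarrow> 'a"
  obtains \<rho> :: "'a \<Rightarrow> 'i list" where "inj_on \<rho> (sums X u I)"
proof
  define \<rho> where "\<rho> y = (SOME l. set l \<subseteq> I \<and> y = msum X (map u l))" for y
  have "set (\<rho> y) \<subseteq> I \<and> y = msum X (map u (\<rho> y))" if "y \<in> sums X u I" for y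
  proof -
    have "\<exists>l. set l \<subseteq> I \<and> y = msum X (map u l)" using that unfolding sums_def by blast
    then show ?thesis unfolding \<rho>_def by (rule someI_ex)
  qed
  then show "inj_on \<rho> (sums X u I)" by (metis inj_onI)
qed

lemma span_sums_submod:
  assumes lm: "is_lmodule X" and v: "v ` J \<subseteq> mcar X"
  shows "submod X (sums X (\<lambda>(r, j). msmult X r (v j)) (UNIV \<times> J))"
proof (rule sums_submod[OF lm])
  show "(\<lambda>(r, j). msmult X r (v j)) ` (UNIV \<times> J) \<subseteq> mcar X" using v lm by auto
  fix r i assume "i \<in> (UNIV :: 'a set) \<times> J"
  then show "\<exists>k\<in>UNIV \<times> J. (\<lambda>(r, j). msmult X r (v j)) k = msmult X r ((\<lambda>(r, j). msmult X r (v j)) i)"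
    using v lm_smassoc[OF lm] by (intro bexI[of _ "(r * fst i, snd i)"]) (auto simp: split_beta)
qed

section \<open>Submodules and homomorphisms\<close>

lemma submodD:
  "submod X N \<Longrightarrow> N \<subseteq> mcar X"
  "submod X N \<Longrightarrow> mzero X \<in> N"
  "submod X N \<Longrightarrow> x \<in> N \<Longrightarrow> y \<in> N \<Longrightarrow> madd X x y \<in> N"
  "submod X N \<Longrightarrow> x \<in> N \<Longrightarrow> msmult X r x \<in> N"
  by (auto simp: submod_def)

lemma submod_full: "is_lmodule X \<Longrightarrow> submod X (mcar X)"
  by (auto simp: submod_def)

lemma submod_inter: "submod X A \<Longrightarrow> submod X B \<Longrightarrow> submod X (A \<inter> B)"
  by (auto simp: submod_def)

lemma subm_simps [simp]:
  "mcar (subm X N) = N" "madd (subm X N) = madd X"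
  "mzero (subm X N) = mzero X" "msmult (subm X N) = msmult X"
  by (auto simp: subm_def)

lemma subm_full [simp]: "subm X (mcar X) = X"
  by (simp add: subm_def)

lemma msum_subm [simp]: "msum (subm X N) xs = msum X xs"
  and sums_subm [simp]: "sums (subm X N) u I = sums X u I"
  by (simp_all add: msum_def sums_def)

text \<open>A submodule is a module; additive inverses are provided by \<open>(-1) x\<close>.\<close>
lemma submod_lm:
  assumes lm: "is_lmodule X" and s: "submod X N"
  shows "is_lmodule (subm X N)"
proof -
  have N: "\<And>x. x \<in> N \<Longrightarrow> x \<in> mcar X" using s by (auto simp: submod_def)
  show ?thesis unfolding is_lmodule_def subm_simps
  proof (intro conjI ballI allI)
    fix x y z assume "x \<in> N" "y \<in> N" "z \<in> N"
    then show "madd X (madd X x y) z = madd X x (madd X y z)"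
      using N lm_assoc[OF lm] by blast
  next
    fix x y r assume "x \<in> N" "y \<in> N"
    then show "madd X x y = madd X y x" "madd X x y \<in> N"
      "msmult X r (madd X x y) = madd X (msmult X r x) (msmult X r y)"
      using N lm_comm[OF lm] lm_sdist[OF lm] submodD(3)[OF s] by auto
  next
    fix x r s' assume x: "x \<in> N"
    then show "madd X (mzero X) x = x" "msmult X (r + s') x = madd X (msmult X r x) (msmult X s' x)"
      "msmult X (r * s') x = msmult X r (msmult X s' x)" "msmult X 1 x = x" "msmult X r x \<in> N"
      using N lm lm_adist[OF lm] lm_smassoc[OF lm] submodD(4)[OF s] by simp_all
    show "\<exists>y\<in>N. madd X x y = mzero X"
      using x N lm_neg[OF lm] submodD(4)[OF s x] by blast
  qed (use submodD(2)[OF s] in simp)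
qed

lemma homD:
  "hom X Y f \<Longrightarrow> x \<in> mcar X \<Longrightarrow> f x \<in> mcar Y"
  "hom X Y f \<Longrightarrow> x \<in> mcar X \<Longrightarrow> y \<in> mcar X \<Longrightarrow> f (madd X x y) = madd Y (f x) (f y)"
  "hom X Y f \<Longrightarrow> x \<in> mcar X \<Longrightarrow> f (msmult X r x) = msmult Y r (f x)"
  by (auto simp: hom_def)

lemma hom_comp: "hom X Y f \<Longrightarrow> hom Y Z g \<Longrightarrow> hom X Z (g \<circ> f)"
  by (auto simp: hom_def)

lemma hom_id: "hom X X id"
  by (auto simp: hom_def)

lemma hom_subm_iff: "N \<subseteq> mcar X \<Longrightarrow> hom A (subm X N) f \<longleftrightarrow> hom A X f \<and> (\<forall>x\<in>mcar A. f x \<in> N)"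
  unfolding hom_def subm_simps by blast

lemma hom_from_subm: "hom X Y f \<Longrightarrow> N \<subseteq> mcar X \<Longrightarrow> hom (subm X N) Y f"
  unfolding hom_def subm_simps by blast

lemma hom_zero:
  assumes lmX: "is_lmodule X" and lmY: "is_lmodule Y" and f: "hom X Y f"
  shows "f (mzero X) = mzero Y"
proof -
  have "madd Y (f (mzero X)) (f (mzero X)) = f (mzero X)"
    using homD(2)[OF f, of "mzero X" "mzero X"] lmX by simp
  then show ?thesis using lm_idem[OF lmY] homD(1)[OF f] lmX by simp
qed

lemma hom_msum:
  assumes f: "hom X Y f" and lmX: "is_lmodule X" and lmY: "is_lmodule Y"
  shows "set xs \<subseteq> mcar X \<Longrightarrow> f (msum X xs) = msum Y (map f xs)"
proof (induction xs)
  case Nil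
  then show ?case using hom_zero[OF lmX lmY f] by simp
next
  case (Cons a xs)
  then show ?case using homD(2)[OF f] msum_in[OF lmX] by simp
qed

lemma hom_sums:
  assumes f: "hom X Y f" and lmX: "is_lmodule X" and lmY: "is_lmodule Y"
    and u: "u ` I \<subseteq> mcar X"
  shows "f ` sums X u I \<subseteq> sums Y (f \<circ> u) I"
proof
  fix y assume "y \<in> f ` sums X u I"
  then obtain l where l: "set l \<subseteq> I" "y = f (msum X (map u l))"
    unfolding sums_def by blast
  then have "y = msum Y (map (f \<circ> u) l)"
    using hom_msum[OF f lmX lmY, of "map u l"] u by auto
  then show "y \<in> sums Y (f \<circ> u) I" using l(1) unfolding sums_def by blast
qed

lemma family_sums_submod:
  assumes lmM: "is_lmodule M" and lmY: "is_lmodule Y" and G: "\<And>c. c \<in> C \<Longrightarrow> hom M Y (G c)"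
  shows "submod Y (sums Y (\<lambda>(c, m). G c m) (C \<times> mcar M))"
proof (rule sums_submod[OF lmY])
  show "(\<lambda>(c, m). G c m) ` (C \<times> mcar M) \<subseteq> mcar Y" using homD(1)[OF G] by auto
  fix r i assume i: "i \<in> C \<times> mcar M"
  then have "(fst i, msmult M r (snd i)) \<in> C \<times> mcar M"
    "(\<lambda>(c, m). G c m) (fst i, msmult M r (snd i)) = msmult Y r ((\<lambda>(c, m). G c m) i)"
    using homD(3)[OF G] lm_smult[OF lmM] by (auto simp: split_beta)
  then show "\<exists>j\<in>C \<times> mcar M. (\<lambda>(c, m). G c m) j = msmult Y r ((\<lambda>(c, m). G c m) i)" by blast
qed

lemma hom_image_submod:
  assumes lmX: "is_lmodule X" and lmY: "is_lmodule Y" and f: "hom X Y f" and S: "submod X S"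
  shows "submod Y (f ` S)"
  unfolding submod_def
proof (intro conjI ballI allI)
  have SX: "\<And>a. a \<in> S \<Longrightarrow> a \<in> mcar X" using submodD(1)[OF S] by blast
  then show "f ` S \<subseteq> mcar Y" using homD(1)[OF f] by blast
  show "mzero Y \<in> f ` S" using hom_zero[OF lmX lmY f] submodD(2)[OF S] by force
  fix x y assume "x \<in> f ` S" "y \<in> f ` S"
  then obtain a b where ab: "a \<in> S" "b \<in> S" "x = f a" "y = f b" by blast
  then have "madd Y x y = f (madd X a b)" using homD(2)[OF f] SX by simp
  then show "madd Y x y \<in> f ` S" using submodD(3)[OF S ab(1,2)] by simp
next
  fix r x assume "x \<in> f ` S"
  then obtain a where a: "a \<in> S" "x = f a" by blast
  then have "msmult Y r x = f (msmult X r a)" using homD(3)[OF f] submodD(1)[OF S] by auto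
  then show "msmult Y r x \<in> f ` S" using submodD(4)[OF S a(1)] by simp
qed

lemma hom_preimage_submod:
  assumes lmX: "is_lmodule X" and lmY: "is_lmodule Y" and f: "hom X Y f" and T: "submod Y T"
  shows "submod X {x \<in> mcar X. f x \<in> T}"
  using hom_zero[OF lmX lmY f] homD[OF f] submodD[OF T] lmX by (auto simp: submod_def)

lemma lm_image:
  assumes lm: "is_lmodule X" and h: "hom X Q p" and s: "p ` mcar X = mcar Q"
    and z: "mzero Q = p (mzero X)"
  shows "is_lmodule Q"
proof -
  have ex: "\<And>a. a \<in> mcar Q \<Longrightarrow> \<exists>x\<in>mcar X. a = p x" using s by blast
  note add = homD(2)[OF h, symmetric] and sm = homD(3)[OF h, symmetric] and inQ = homD(1)[OF h]
  show ?thesis unfolding is_lmodule_def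
  proof (intro conjI ballI allI)
    show "mzero Q \<in> mcar Q" using z inQ lm by simp
    fix x y assume "x \<in> mcar Q" "y \<in> mcar Q"
    then obtain a b where ab: "a \<in> mcar X" "b \<in> mcar X" "x = p a" "y = p b" using ex by blast
    show "madd Q x y \<in> mcar Q" using ab by (simp add: add inQ lm)
    show "madd Q x y = madd Q y x" using ab by (simp add: add lm_comm[OF lm])
    fix r show "msmult Q r (madd Q x y) = madd Q (msmult Q r x) (msmult Q r y)"
      using ab by (simp add: add sm lm lm_sdist[OF lm])
  next
    fix x y z assume "x \<in> mcar Q" "y \<in> mcar Q" "z \<in> mcar Q"
    then obtain a b c where "a \<in> mcar X" "x = p a" "b \<in> mcar X" "y = p b" "c \<in> mcar X" "z = p c"
      using ex by meson
    then show "madd Q (madd Q x y) z = madd Q x (madd Q y z)" by (simp add: add lm lm_assoc[OF lm])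
  next
    fix x assume "x \<in> mcar Q"
    then obtain a where a: "a \<in> mcar X" "x = p a" using ex by blast
    show "madd Q (mzero Q) x = x" "msmult Q 1 x = x" using a z by (simp_all add: add sm lm)
    obtain b where b: "b \<in> mcar X" "madd X a b = mzero X" using lm_inv[OF lm a(1)] by blast
    then show "\<exists>y\<in>mcar Q. madd Q x y = mzero Q" using a z inQ by (metis add)
    fix r show "msmult Q r x \<in> mcar Q" using a by (simp add: sm inQ lm)
    fix s show "msmult Q (r + s) x = madd Q (msmult Q r x) (msmult Q s x)"
      using a by (simp add: sm add lm lm_adist[OF lm])
    show "msmult Q (r * s) x = msmult Q r (msmult Q s x)" using a by (simp add: sm lm lm_smassoc[OF lm])
  qed
qed

section \<open>Quotient modules\<close>

context
  fixes X :: "('r::{ring,monoid_mult}, 'a) lmodule" and P :: "'a set"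
  assumes lm: "is_lmodule X" and sP: "submod X P"
begin

lemma P_in: "p \<in> P \<Longrightarrow> p \<in> mcar X"
  using submodD(1)[OF sP] by blast

lemma coset_self: "x \<in> mcar X \<Longrightarrow> x \<in> coset X P x"
  unfolding coset_def using submodD(2)[OF sP] lm by force

lemma coset_eq:
  assumes x: "x \<in> mcar X" and y: "y \<in> coset X P x"
  shows "coset X P y = coset X P x"
proof -
  obtain p where p: "p \<in> P" "y = madd X x p" using y unfolding coset_def by blast
  define n where "n = msmult X (-1) p"
  have pn: "p \<in> mcar X" "n \<in> P" "n \<in> mcar X" "madd X p n = mzero X"
    using p(1) P_in submodD(4)[OF sP] lm_neg[OF lm] unfolding n_def by auto
  have "madd X y q \<in> coset X P x" if "q \<in> P" for q
    using that p pn x P_in submodD(3)[OF sP] unfolding coset_def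
    by (auto simp: lm_assoc[OF lm] intro!: exI[of _ "madd X p q"])
  moreover have "madd X x q \<in> coset X P y" if q: "q \<in> P" for q
  proof -
    have qX: "q \<in> mcar X" using P_in q by blast
    have "madd X y (madd X n q) = madd X x (madd X p (madd X n q))"
      using p pn x qX by (simp add: lm lm_assoc[OF lm])
    also have "\<dots> = madd X x q"
      using pn qX by (simp add: lm lm_assoc[OF lm, symmetric])
    finally have "madd X x q = madd X y (madd X n q)" ..
    then show ?thesis using submodD(3)[OF sP pn(2) q] unfolding coset_def by blast
  qed
  ultimately show ?thesis unfolding coset_def by blast
qed

lemma coset_zero0: "coset X P (mzero X) = P"
  unfolding coset_def using P_in lm by force

lemma coset_zero: "x \<in> mcar X \<Longrightarrow> coset X P x = P \<longleftrightarrow> x \<in> P"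
  using coset_self coset_eq[of "mzero X" x] coset_zero0 lm by auto

lemma coset_add:
  assumes "x \<in> mcar X" "y \<in> mcar X" "a \<in> coset X P x" "b \<in> coset X P y"
  shows "madd X a b \<in> coset X P (madd X x y)"
proof -
  obtain p q where pq: "p \<in> P" "a = madd X x p" "q \<in> P" "b = madd X y q"
    using assms unfolding coset_def by blast
  then have "madd X a b = madd X (madd X x y) (madd X p q)"
    using assms P_in lm_swap[OF lm] by simp
  then show ?thesis using pq submodD(3)[OF sP] unfolding coset_def by blast
qed

lemma coset_smult:
  assumes "x \<in> mcar X" "a \<in> coset X P x"
  shows "msmult X r a \<in> coset X P (msmult X r x)"
proof -
  obtain p where "p \<in> P" "a = madd X x p" using assms unfolding coset_def by blast
  moreover then have "msmult X r a = madd X (msmult X r x) (msmult X r p)"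
    using lm_sdist[OF lm] assms P_in by simp
  ultimately show ?thesis unfolding coset_def using submodD(4)[OF sP] by blast
qed

lemma some_coset: "x \<in> mcar X \<Longrightarrow> (SOME a. a \<in> coset X P x) \<in> coset X P x"
  using coset_self by (rule someI)

lemma quot_car: "mcar (quot X P) = coset X P ` mcar X"
  and quot_zero: "mzero (quot X P) = P"
  by (simp_all add: quot_def)

lemma quot_hom: "hom X (quot X P) (coset X P)"
  unfolding hom_def
proof (intro conjI ballI allI)
  fix x y r assume x: "x \<in> mcar X" and y: "y \<in> mcar X"
  show "coset X P x \<in> mcar (quot X P)" using x by (simp add: quot_def)
  show "coset X P (madd X x y) = madd (quot X P) (coset X P x) (coset X P y)"
    using coset_eq[of "madd X x y"] coset_add[OF x y some_coset[OF x] some_coset[OF y]] x y lm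
    by (simp add: quot_def)
  show "coset X P (msmult X r x) = msmult (quot X P) r (coset X P x)"
    using coset_eq[of "msmult X r x"] coset_smult[OF x some_coset[OF x]] x lm
    by (simp add: quot_def)
qed

lemma quot_lm: "is_lmodule (quot X P)"
  by (rule lm_image[OF lm quot_hom]) (simp_all only: quot_car quot_zero coset_zero0)

lemma quot_ne: "P \<noteq> mcar X \<Longrightarrow> mcar (quot X P) \<noteq> {P}"
  using submodD(1)[OF sP] coset_zero by (auto simp: quot_car)

lemma quot_rep_inj: "inj_on (\<lambda>c. SOME a. a \<in> c) (mcar (quot X P))"
proof (rule inj_onI)
  fix c d assume "c \<in> mcar (quot X P)" "d \<in> mcar (quot X P)"
    and eq: "(SOME a. a \<in> c) = (SOME a. a \<in> d)"
  then obtain x y where "x \<in> mcar X" "y \<in> mcar X" "c = coset X P x" "d = coset X P y"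
    by (auto simp: quot_car)
  then show "c = d" using coset_eq some_coset eq by metis
qed

end

section \<open>Transport of modules along injections\<close>

text \<open>The notions of the development quantify over modules whose carrier lies in a
  fixed type.\<close>

definition transport :: "('r, 'a) lmodule \<Rightarrow> ('a \<Rightarrow> 'b) \<Rightarrow> ('r, 'b) lmodule" where
  "transport Z \<phi> = \<lparr>mcar = \<phi> ` mcar Z,
     madd = (\<lambda>a b. \<phi> (madd Z (the_inv_into (mcar Z) \<phi> a) (the_inv_into (mcar Z) \<phi> b))),
     mzero = \<phi> (mzero Z),
     msmult = (\<lambda>r a. \<phi> (msmult Z r (the_inv_into (mcar Z) \<phi> a)))\<rparr>"

lemma transport_simps:
  "mcar (transport Z \<phi>) = \<phi> ` mcar Z"
  "mzero (transport Z \<phi>) = \<phi> (mzero Z)"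
  "madd (transport Z \<phi>) a b = \<phi> (madd Z (the_inv_into (mcar Z) \<phi> a) (the_inv_into (mcar Z) \<phi> b))"
  "msmult (transport Z \<phi>) r a = \<phi> (msmult Z r (the_inv_into (mcar Z) \<phi> a))"
  by (simp_all add: transport_def)

context
  fixes Z :: "('r::{ring,monoid_mult}, 'a) lmodule" and \<phi> :: "'a \<Rightarrow> 'b"
  assumes lm: "is_lmodule Z" and inj: "inj_on \<phi> (mcar Z)"
begin

lemma transport_hom: "hom Z (transport Z \<phi>) \<phi>"
  unfolding hom_def transport_simps using the_inv_into_f_f[OF inj] lm by simp

lemma transport_lm: "is_lmodule (transport Z \<phi>)"
  by (rule lm_image[OF lm transport_hom]) (simp_all only: transport_simps)

lemma transport_inv_hom: "hom (transport Z \<phi>) Z (the_inv_into (mcar Z) \<phi>)"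
  unfolding hom_def transport_simps
  using the_inv_into_f_f[OF inj] the_inv_into_into[OF inj] lm by auto

lemma transport_inv_inj: "inj_on (the_inv_into (mcar Z) \<phi>) (mcar (transport Z \<phi>))"
  unfolding transport_simps using inj inj_on_the_inv_into by blast

end

section \<open>The product \<open>N\<cdot>X\<close> and annihilation\<close>

lemma mprod_sub: "mprod M N X \<subseteq> mcar X"
  by (auto simp: mprod_def)

lemma mprod_fun:
  assumes k: "hom M X k" and n: "n \<in> mcar M" "n \<in> N"
  shows "k n \<in> mprod M N X"
  unfolding mprod_def
proof (safe)
  show "k n \<in> mcar X" using homD(1)[OF k n(1)] .
  fix W :: "('a, 'c) lmodule" and g assume kill: "kills M N W" and g: "hom X W g"
  have "(g \<circ> k) n = mzero W" using kill hom_comp[OF k g] n(2) unfolding kills_def by blast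
  then show "g (k n) = mzero W" by simp
qed

lemma kills_of_mprod:
  assumes "mprod M N X \<subseteq> {mzero X}" "N \<subseteq> mcar M"
  shows "kills M N X"
  unfolding kills_def
proof (intro allI impI ballI)
  fix f n assume f: "hom M X f" and n: "n \<in> N"
  have "f n \<in> mprod M N X" using mprod_fun[OF f _ n] n assms(2) by auto
  then show "f n = mzero X" using assms(1) by auto
qed

lemma mprod_of_kills:
  assumes "kills M N X" "is_lmodule X"
  shows "mprod M N X \<subseteq> {mzero X}"
proof
  fix x assume "x \<in> mprod M N X"
  then have "id x = mzero X" using assms hom_id[of X] unfolding mprod_def by blast
  then show "x \<in> {mzero X}" by simp
qed

lemma kills_subm: "kills M N X \<Longrightarrow> S \<subseteq> mcar X \<Longrightarrow> kills M N (subm X S)"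
  unfolding kills_def by (simp add: hom_subm_iff)

lemma kills_inj:
  assumes kill: "kills M N Z" and \<psi>: "hom T Z \<psi>" "inj_on \<psi> (mcar T)"
    and lmT: "is_lmodule T" and lmZ: "is_lmodule Z" and NM: "N \<subseteq> mcar M"
  shows "kills M N T"
  unfolding kills_def
proof (intro allI impI ballI)
  fix f n assume f: "hom M T f" and n: "n \<in> N"
  have "\<psi> (f n) = \<psi> (mzero T)"
    using kill hom_comp[OF f \<psi>(1)] n hom_zero[OF lmT lmZ \<psi>(1)] unfolding kills_def by simp
  then show "f n = mzero T" using \<psi>(2) homD(1)[OF f] n NM lmT by (auto dest: inj_onD)
qed

text \<open>Since \<open>N\<cdot>X\<close> only tests modules in the type of \<open>X\<close>, the image of the
  homomorphism has to be transported there, which needs an injection \<open>\<iota>\<close>.\<close>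
lemma mprod_kernel:
  fixes X :: "('r::{ring,monoid_mult}, 'x) lmodule" and W :: "('r, 'w) lmodule"
    and \<iota> :: "'w \<Rightarrow> 'x"
  assumes lmX: "is_lmodule X" and lmW: "is_lmodule W" and NM: "N \<subseteq> mcar M"
    and kill: "kills M N W" and g: "hom X W g" and \<iota>: "inj_on \<iota> (g ` mcar X)"
    and x: "x \<in> mprod M N X"
  shows "g x = mzero W"
proof -
  define S where "S = g ` mcar X"
  have sS: "submod W S" unfolding S_def using hom_image_submod[OF lmX lmW g submod_full[OF lmX]] .
  have SW: "S \<subseteq> mcar W" using submodD(1)[OF sS] .
  have lmS: "is_lmodule (subm W S)" using submod_lm[OF lmW sS] .
  have injS: "inj_on \<iota> (mcar (subm W S))" using \<iota> unfolding S_def by simp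
  define T where "T = transport (subm W S) \<iota>"
  have lmT: "is_lmodule T" unfolding T_def using transport_lm[OF lmS injS] .
  have "kills M N T"
    using kills_inj[OF kills_subm[OF kill SW] transport_inv_hom[OF lmS injS]
        transport_inv_inj[OF lmS injS] _ lmS NM] lmT unfolding T_def .
  moreover have "hom X T (\<iota> \<circ> g)"
    using hom_comp[of X "subm W S" g, OF _ transport_hom[OF lmS injS]] g SW
    unfolding T_def S_def by (simp add: hom_subm_iff)
  ultimately have "(\<iota> \<circ> g) x = mzero T"
    using x lmT unfolding mprod_def by blast
  then have "\<iota> (g x) = \<iota> (mzero W)" unfolding T_def transport_simps by simp
  moreover have "g x \<in> S" "mzero W \<in> S"
    using subsetD[OF mprod_sub x] submodD(2)[OF sS] unfolding S_def by auto
  ultimately show ?thesis using \<iota> inj_onD unfolding S_def by metis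
qed

section \<open>Modules in \<open>\<sigma>[M]\<close>\<close>

lemma Mgenerated_iff_sums:
  assumes lmM: "is_lmodule M" and lmY: "is_lmodule Y"
  shows "Mgenerated M Y \<longleftrightarrow> mcar Y \<subseteq> sums Y (\<lambda>(f, m). f m) ({f. hom M Y f} \<times> mcar M)"
    (is "_ \<longleftrightarrow> _ \<subseteq> sums Y ?u ?I")
proof -
  have gen: "\<Union>{f ` mcar M | f. hom M Y f} = ?u ` ?I" by (auto simp: image_iff)
  have uY: "?u ` ?I \<subseteq> mcar Y" using homD(1) by auto
  have "submod Y (sums Y ?u ?I)" using family_sums_submod[OF lmM lmY, of "{f. hom M Y f}" "\<lambda>f. f"] by simp
  moreover have "?u ` ?I \<subseteq> sums Y ?u ?I"
    using sums_mem[OF lmY, of _ ?I ?u] uY by blast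
  ultimately have "span Y (?u ` ?I) \<subseteq> sums Y ?u ?I" by (rule span_least)
  moreover have "span Y (?u ` ?I) \<subseteq> mcar Y" using span_least[OF submod_full[OF lmY] uY] .
  ultimately show ?thesis
    unfolding Mgenerated_def gen using sums_span[of Y ?u ?I] by auto
qed

text \<open>The
  generated submodule is \<open>M\<close>-generated, and representing each of its elements by a
  list of (index, element of \<open>M\<close>) pairs moves it into the carrier type
  required in the definition of \<open>\<sigma>[M]\<close>.\<close>
lemma in_sigma_family:
  fixes M :: "('r::{ring,monoid_mult}, 'm) lmodule" and Z :: "('r, 'z) lmodule"
    and Y :: "('r, 'y) lmodule" and G :: "'z \<Rightarrow> 'm \<Rightarrow> 'y"
  assumes lmM: "is_lmodule M" and lmY: "is_lmodule Y" and lmZ: "is_lmodule Z"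
    and G: "\<And>c. hom M Y (G c)" and e: "hom Z Y e" "inj_on e (mcar Z)"
    and img: "e ` mcar Z \<subseteq> sums Y (\<lambda>(c, m). G c m) (UNIV \<times> mcar M)"
  shows "in_sigma M Z"
proof -
  define u :: "'z \<times> 'm \<Rightarrow> 'y" where "u = (\<lambda>(c, m). G c m)"
  define I :: "('z \<times> 'm) set" where "I = UNIV \<times> mcar M"
  define Y0 where "Y0 = sums Y u I"
  have sY0: "submod Y Y0" unfolding Y0_def u_def I_def using family_sums_submod[OF lmM lmY G] .
  have Y0Y: "Y0 \<subseteq> mcar Y" using submodD(1)[OF sY0] .
  have uY0: "u ` I \<subseteq> Y0"
    unfolding Y0_def using sums_mem[OF lmY, of _ I u] homD(1)[OF G] unfolding u_def I_def by auto
  obtain rep :: "'y \<Rightarrow> ('z \<times> 'm) list" where inj: "inj_on rep Y0"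
    using sums_inj_list unfolding Y0_def by blast
  have lmY0: "is_lmodule (subm Y Y0)" using submod_lm[OF lmY sY0] .
  define T where "T = transport (subm Y Y0) rep"
  have lmT: "is_lmodule T" unfolding T_def using transport_lm[OF lmY0] inj by simp
  have repH: "hom (subm Y Y0) T rep" unfolding T_def using transport_hom[OF lmY0] inj by simp
  have GT: "hom M T (rep \<circ> G c)" for c
  proof -
    have "\<forall>m\<in>mcar M. G c m \<in> Y0" using uY0 unfolding u_def I_def by auto
    then have "hom M (subm Y Y0) (G c)" unfolding hom_subm_iff[OF Y0Y] using G by blast
    then show ?thesis using hom_comp[OF _ repH] by blast
  qed
  have "mcar T \<subseteq> rep ` sums (subm Y Y0) u I"
    unfolding T_def transport_simps Y0_def by simp
  also have "\<dots> \<subseteq> sums T (rep \<circ> u) I"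
    using hom_sums[OF repH lmY0 lmT] uY0 by simp
  also have "\<dots> \<subseteq> sums T (\<lambda>(f, m). f m) ({f. hom M T f} \<times> mcar M)"
    by (rule sums_reindex[of _ "\<lambda>(c, m). (rep \<circ> G c, m)"]) (auto simp: GT u_def I_def)
  finally have "Mgenerated M T" using Mgenerated_iff_sums[OF lmM lmT] by blast
  moreover have "e ` mcar Z \<subseteq> Y0" using img unfolding Y0_def u_def I_def .
  then have "hom Z (subm Y Y0) e" unfolding hom_subm_iff[OF Y0Y] using e(1) by blast
  then have "hom Z T (rep \<circ> e)" using hom_comp[OF _ repH] by blast
  moreover have "inj_on (rep \<circ> e) (mcar Z)"
    using e(2) inj_on_subset[OF inj \<open>e ` mcar Z \<subseteq> Y0\<close>] by (rule comp_inj_on)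
  ultimately show ?thesis unfolding in_sigma_def using lmT by blast
qed

lemma in_sigma_image:
  assumes lmM: "is_lmodule M" and lmZ: "is_lmodule Z"
    and f: "hom M Z f" and onto: "f ` mcar M = mcar Z"
  shows "in_sigma M Z"
proof (rule in_sigma_family[OF lmM lmZ lmZ f hom_id])
  show "id ` mcar Z \<subseteq> sums Z (\<lambda>(c, m). f m) (UNIV \<times> mcar M)"
  proof
    fix z assume "z \<in> id ` mcar Z"
    then have "z \<in> f ` mcar M" using onto by simp
    then obtain m where m: "m \<in> mcar M" "z = f m" by blast
    then show "z \<in> sums Z (\<lambda>(c, m). f m) (UNIV \<times> mcar M)"
      using sums_mem[OF lmZ, of "(undefined, m)" "UNIV \<times> mcar M" "\<lambda>(c, m). f m"]
        homD(1)[OF f m(1)] by simp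
  qed
qed (simp add: inj_on_def)

lemma in_sigma_self: "is_lmodule M \<Longrightarrow> in_sigma M M"
  using in_sigma_image[of M M id] hom_id[of M] by simp

lemma in_sigma_subm:
  fixes M :: "('r::{ring,monoid_mult}, 'm) lmodule" and A :: "('r, 'a) lmodule"
  assumes sig: "in_sigma M A" and sZ: "submod A Z"
  shows "in_sigma M (subm A Z)"
proof -
  have Z: "Z \<subseteq> mcar A" using submodD(1)[OF sZ] .
  obtain Y :: "('r, ('a \<times> 'm) list) lmodule" and h
    where "is_lmodule Y" "Mgenerated M Y" "hom A Y h" "inj_on h (mcar A)"
    using sig unfolding in_sigma_def by blast
  then show ?thesis unfolding in_sigma_def
    using hom_from_subm[of A Y h, OF _ Z] inj_on_subset[OF _ Z] by auto
qed

text \<open>In an \<open>M\<close>-generated module, every family \<open>u\<close> indexed by \<open>'i\<close> lies in the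
  submodule generated by a family of homomorphisms \<open>M \<rightarrow> Y\<close> indexed by \<open>'i list\<close>:
  each \<open>u i\<close> is a finite sum of values of homomorphisms, and the \<open>k\<close>-th of them gets the
  index \<open>replicate (k + 1) i\<close>.\<close>
lemma Mgenerated_list_family:
  fixes M :: "('r::{ring,monoid_mult}, 'm) lmodule" and Y :: "('r, 'y) lmodule" and u :: "'i \<Rightarrow> 'y"
  assumes lmM: "is_lmodule M" and lmY: "is_lmodule Y" and gen: "Mgenerated M Y"
    and u: "u ` I \<subseteq> mcar Y"
  shows "\<exists>G :: 'i list \<Rightarrow> 'm \<Rightarrow> 'y. (\<forall>c. hom M Y (G c)) \<and>
           u ` I \<subseteq> sums Y (\<lambda>(c, m). G c m) (UNIV \<times> mcar M)"
proof -
  define v :: "('m \<Rightarrow> 'y) \<times> 'm \<Rightarrow> 'y" where "v = (\<lambda>(f, m). f m)"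
  define J where "J = {f. hom M Y f} \<times> mcar M"
  define ps where "ps i = (SOME l. set l \<subseteq> J \<and> u i = msum Y (map v l))" for i
  have ps: "set (ps i) \<subseteq> J \<and> u i = msum Y (map v (ps i))" if "i \<in> I" for i
  proof -
    have "u i \<in> sums Y v J"
      using that u gen Mgenerated_iff_sums[OF lmM lmY] unfolding v_def J_def by blast
    then have "\<exists>l. set l \<subseteq> J \<and> u i = msum Y (map v l)" unfolding sums_def by blast
    then show ?thesis unfolding ps_def by (rule someI_ex)
  qed
  define G :: "'i list \<Rightarrow> 'm \<Rightarrow> 'y" where
    "G c = (case c of [] \<Rightarrow> (\<lambda>_. mzero Y) | i # c' \<Rightarrow>
       if i \<in> I \<and> length c' < length (ps i) then fst (ps i ! length c') else (\<lambda>_. mzero Y))" for c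
  have G_code: "G (replicate (Suc k) i) = fst (ps i ! k)" if "i \<in> I" "k < length (ps i)" for i k
    using that unfolding G_def by simp
  have G: "hom M Y (G c)" for c
  proof -
    have zero: "hom M Y (\<lambda>_. mzero Y)" using lmY by (simp add: hom_def)
    have "hom M Y (fst (ps i ! k))" if "i \<in> I" "k < length (ps i)" for i k
      using ps[OF that(1)] nth_mem[OF that(2)] unfolding J_def by auto
    then show ?thesis using zero unfolding G_def by (auto split: list.split)
  qed
  have "u i \<in> sums Y (\<lambda>(c, m). G c m) (UNIV \<times> mcar M)" if i: "i \<in> I" for i
  proof -
    let ?E = "set (enumerate 0 (ps i))"
    have "u i = msum Y (map (v \<circ> snd) (enumerate 0 (ps i)))"
      using ps[OF i] by (simp flip: map_map)
    then have "u i \<in> sums Y (v \<circ> snd) ?E" unfolding sums_def by blast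
    also have "\<dots> \<subseteq> sums Y (\<lambda>(c, m). G c m) (UNIV \<times> mcar M)"
    proof (rule sums_reindex[of _ "\<lambda>(k, p). (replicate (Suc k) i, snd p)"])
      fix q assume "q \<in> ?E"
      then have "fst q < length (ps i)" "ps i ! fst q = snd q"
        by (auto simp: in_set_enumerate_eq)
      moreover have "snd (snd q) \<in> mcar M" using ps[OF i] nth_mem[OF calculation(1)] calculation(2)
        unfolding J_def by auto
      ultimately show "(\<lambda>(k, p). (replicate (Suc k) i, snd p)) q \<in> UNIV \<times> mcar M \<and>
          (\<lambda>(c, m). G c m) ((\<lambda>(k, p). (replicate (Suc k) i, snd p)) q) = (v \<circ> snd) q"
        using G_code[OF i] unfolding v_def by (auto simp: split_beta)
    qed
    finally show ?thesis .
  qed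
  then show ?thesis using G by blast
qed

lemma in_sigma_list_family:
  fixes M :: "('r::{ring,monoid_mult}, 'm) lmodule" and A :: "('r, 'a) lmodule"
    and Z :: "('r, 'i list) lmodule" and u :: "'i \<Rightarrow> 'a"
  assumes lmM: "is_lmodule M" and lmA: "is_lmodule A" and sig: "in_sigma M A"
    and lmZ: "is_lmodule Z" and uA: "u ` I \<subseteq> mcar A"
    and e: "hom Z A e" "inj_on e (mcar Z)" and img: "e ` mcar Z \<subseteq> sums A u I"
  shows "in_sigma M Z"
proof -
  obtain Y :: "('r, ('a \<times> 'm) list) lmodule" and h
    where Y: "is_lmodule Y" "Mgenerated M Y" and h: "hom A Y h" "inj_on h (mcar A)"
    using sig unfolding in_sigma_def by blast
  have hu0: "(h \<circ> u) ` I \<subseteq> mcar Y" using homD(1)[OF h(1)] uA by auto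
  obtain G :: "'i list \<Rightarrow> 'm \<Rightarrow> ('a \<times> 'm) list" where G: "\<forall>c. hom M Y (G c)"
    and hu: "(h \<circ> u) ` I \<subseteq> sums Y (\<lambda>(c, m). G c m) (UNIV \<times> mcar M)"
    using Mgenerated_list_family[OF lmM Y hu0] by blast
  have "(h \<circ> e) ` mcar Z \<subseteq> h ` sums A u I" using img by auto
  also have "\<dots> \<subseteq> sums Y (h \<circ> u) I" using hom_sums[OF h(1) lmA Y(1) uA] .
  also have "\<dots> \<subseteq> sums Y (\<lambda>(c, m). G c m) (UNIV \<times> mcar M)"
    using sums_least[OF family_sums_submod[OF lmM Y(1) G[rule_format]] hu] .
  finally have img': "(h \<circ> e) ` mcar Z \<subseteq> sums Y (\<lambda>(c, m). G c m) (UNIV \<times> mcar M)" .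
  have "e ` mcar Z \<subseteq> mcar A" using homD(1)[OF e(1)] by blast
  then have inj: "inj_on (h \<circ> e) (mcar Z)" using comp_inj_on[OF e(2) inj_on_subset[OF h(2)]] by blast
  show ?thesis
    by (rule in_sigma_family[where G = G and e = "h \<circ> e",
          OF lmM Y(1) lmZ G[rule_format] hom_comp[OF e(1) h(1)] inj img'])
qed

section \<open>Lifting homomorphisms out of \<open>M\<close>\<close>

text \<open>The definition of projectivity only speaks about modules with carrier in
  \<open>('r \<times> 'm) list\<close>; transporting along injections makes it available for modules
  that embed into that type.\<close>
lemma proj_sigma_lift_transport:
  fixes M :: "('r::{ring,monoid_mult}, 'm) lmodule" and A :: "('r, 'a) lmodule"
    and B :: "('r, 'b) lmodule" and \<phi> :: "'a \<Rightarrow> ('r \<times> 'm) list" and \<psi> :: "'b \<Rightarrow> ('r \<times> 'm) list"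
  assumes proj: "proj_sigma M" and lmA: "is_lmodule A" and lmB: "is_lmodule B"
    and \<phi>: "inj_on \<phi> (mcar A)" and \<psi>: "inj_on \<psi> (mcar B)"
    and sigA: "in_sigma M (transport A \<phi>)" and sigB: "in_sigma M (transport B \<psi>)"
    and g: "hom A B g" and onto: "g ` mcar A = mcar B" and f: "hom M B f"
  shows "\<exists>h. hom M A h \<and> (\<forall>m\<in>mcar M. g (h m) = f m)"
proof -
  define iv where "iv = the_inv_into (mcar A) \<phi>"
  have iv: "hom (transport A \<phi>) A iv" unfolding iv_def using transport_inv_hom[OF lmA \<phi>] .
  have g': "hom (transport A \<phi>) (transport B \<psi>) (\<psi> \<circ> g \<circ> iv)"
    using hom_comp[OF hom_comp[OF iv g] transport_hom[OF lmB \<psi>]] by (simp add: comp_assoc)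
  have "iv ` mcar (transport A \<phi>) = mcar A"
    unfolding iv_def transport_simps using the_inv_into_onto[OF \<phi>] .
  then have onto': "(\<psi> \<circ> g \<circ> iv) ` mcar (transport A \<phi>) = mcar (transport B \<psi>)"
    using onto unfolding transport_simps by (metis image_comp)
  have f': "hom M (transport B \<psi>) (\<psi> \<circ> f)" using hom_comp[OF f transport_hom[OF lmB \<psi>]] .
  obtain h' where h': "hom M (transport A \<phi>) h'" "\<forall>m\<in>mcar M. (\<psi> \<circ> g \<circ> iv) (h' m) = (\<psi> \<circ> f) m"
    using proj[unfolded proj_sigma_def, rule_format, of "transport A \<phi>" "transport B \<psi>"]
      transport_lm[OF lmA \<phi>] transport_lm[OF lmB \<psi>] sigA sigB g' onto' f' by blast
  have h: "hom M A (iv \<circ> h')" using hom_comp[OF h'(1) iv] .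
  have "g ((iv \<circ> h') m) = f m" if m: "m \<in> mcar M" for m
  proof -
    have "g ((iv \<circ> h') m) \<in> mcar B" "f m \<in> mcar B" using homD(1)[OF g] homD(1)[OF h m] homD(1)[OF f m] by auto
    then show ?thesis using h'(2) m \<psi> by (auto dest: inj_onD)
  qed
  then show ?thesis using h by blast
qed

lemma small_sums_submod:
  fixes M :: "('r::{ring,monoid_mult}, 'm) lmodule" and A :: "('r, 'a) lmodule" and u :: "'i \<Rightarrow> 'a"
  assumes lmM: "is_lmodule M" and lmA: "is_lmodule A" and sig: "in_sigma M A"
    and uA: "u ` I \<subseteq> mcar A" and sA1: "submod A A1" and A1: "A1 \<subseteq> sums A u I"
  shows "\<exists>\<phi> :: 'a \<Rightarrow> 'i list. inj_on \<phi> A1 \<and> in_sigma M (transport (subm A A1) \<phi>)"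
proof -
  obtain \<phi> :: "'a \<Rightarrow> 'i list" where "inj_on \<phi> (sums A u I)" using sums_inj_list by blast
  then have inj: "inj_on \<phi> A1" using A1 by (rule inj_on_subset)
  have A1A: "A1 \<subseteq> mcar A" using submodD(1)[OF sA1] .
  have lmA1: "is_lmodule (subm A A1)" using submod_lm[OF lmA sA1] .
  have "in_sigma M (transport (subm A A1) \<phi>)"
  proof (rule in_sigma_list_family[OF lmM lmA sig _ uA])
    let ?iv = "the_inv_into A1 \<phi>"
    show "is_lmodule (transport (subm A A1) \<phi>)" using transport_lm[OF lmA1] inj by simp
    have "hom (transport (subm A A1) \<phi>) (subm A A1) ?iv" using transport_inv_hom[OF lmA1] inj by simp
    then show "hom (transport (subm A A1) \<phi>) A ?iv" using hom_subm_iff[OF A1A] by blast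
    show "inj_on ?iv (mcar (transport (subm A A1) \<phi>))" using transport_inv_inj[OF lmA1] inj by simp
    have "?iv ` mcar (transport (subm A A1) \<phi>) = A1"
      unfolding transport_simps subm_simps using the_inv_into_onto[OF inj] .
    then show "?iv ` mcar (transport (subm A A1) \<phi>) \<subseteq> sums A u I" using A1 by blast
  qed
  then show ?thesis using inj by blast
qed

lemma small_image:
  fixes M :: "('r::{ring,monoid_mult}, 'm) lmodule" and B :: "('r, 'b) lmodule"
  assumes lmM: "is_lmodule M" and lmB: "is_lmodule B" and f: "hom M B f"
  shows "\<exists>\<psi> :: 'b \<Rightarrow> ('c \<times> 'm) list. inj_on \<psi> (f ` mcar M) \<and>
           in_sigma M (transport (subm B (f ` mcar M)) \<psi>)"
proof -
  define B1 where "B1 = f ` mcar M"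
  define \<psi> :: "'b \<Rightarrow> ('c \<times> 'm) list" where "\<psi> b = [(undefined, inv_into (mcar M) f b)]" for b
  have inj: "inj_on \<psi> B1"
    using inj_on_inv_into[of B1 f "mcar M"] unfolding B1_def \<psi>_def inj_on_def by auto
  have sB1: "submod B B1" unfolding B1_def using hom_image_submod[OF lmM lmB f submod_full[OF lmM]] .
  have lmB1: "is_lmodule (subm B B1)" using submod_lm[OF lmB sB1] .
  have f1: "hom M (subm B B1) f" using hom_subm_iff[OF submodD(1)[OF sB1]] f unfolding B1_def by blast
  have "in_sigma M (transport (subm B B1) \<psi>)"
  proof (rule in_sigma_image[OF lmM _ hom_comp[OF f1 transport_hom[OF lmB1]]])
    show "is_lmodule (transport (subm B B1) \<psi>)" using transport_lm[OF lmB1] inj by simp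
  qed (use inj in \<open>simp_all add: transport_simps B1_def image_comp\<close>)
  then show ?thesis using inj unfolding B1_def by blast
qed

text \<open>The lifting problem is
  reduced to the submodule \<open>A\<^sub>1\<close> of \<open>A\<close> spanned through chosen preimages \<open>a(m)\<close> of
  the \<open>f(m)\<close> and to \<open>B\<^sub>1 = f(M)\<close>, which are both small.\<close>
lemma lift:
  fixes M :: "('r::{ring,monoid_mult}, 'm) lmodule" and A :: "('r, 'a) lmodule"
    and B :: "('r, 'b) lmodule"
  assumes lmM: "is_lmodule M" and proj: "proj_sigma M"
    and lmA: "is_lmodule A" and sig: "in_sigma M A" and lmB: "is_lmodule B"
    and g: "hom A B g" and f: "hom M B f" and fg: "f ` mcar M \<subseteq> g ` mcar A"
  shows "\<exists>h. hom M A h \<and> (\<forall>m\<in>mcar M. g (h m) = f m)"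
proof -
  define a where "a m = inv_into (mcar A) g (f m)" for m
  have a: "a m \<in> mcar A \<and> g (a m) = f m" if "m \<in> mcar M" for m
  proof -
    have "f m \<in> g ` mcar A" using fg that by blast
    then show ?thesis unfolding a_def by (simp add: inv_into_into f_inv_into_f)
  qed
  define u :: "'r \<times> 'm \<Rightarrow> 'a" where "u = (\<lambda>(r, m). msmult A r (a m))"
  define I :: "('r \<times> 'm) set" where "I = UNIV \<times> mcar M"
  define B1 where "B1 = f ` mcar M"
  define A1 where "A1 = sums A u I \<inter> {x \<in> mcar A. g x \<in> B1}"
  have aA: "a ` mcar M \<subseteq> mcar A" using a by blast
  have uA: "u ` I \<subseteq> mcar A" using aA lmA unfolding u_def I_def by auto
  have sB1: "submod B B1" unfolding B1_def using hom_image_submod[OF lmM lmB f submod_full[OF lmM]] .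
  have "submod A (sums A u I)" unfolding u_def I_def using span_sums_submod[OF lmA aA] .
  then have sA1: "submod A A1"
    unfolding A1_def by (rule submod_inter[OF _ hom_preimage_submod[OF lmA lmB g sB1]])
  have aA1: "a m \<in> A1" if m: "m \<in> mcar M" for m
  proof -
    have "a m = u (1, m)" using a[OF m] lmA unfolding u_def by simp
    then have "a m \<in> sums A u I"
      using sums_mem[OF lmA, of "(1, m)" I u] m a[OF m] unfolding I_def by simp
    then show ?thesis using a[OF m] m unfolding A1_def B1_def by blast
  qed
  obtain \<phi> :: "'a \<Rightarrow> ('r \<times> 'm) list" where \<phi>: "inj_on \<phi> A1" "in_sigma M (transport (subm A A1) \<phi>)"
    using small_sums_submod[OF lmM lmA sig uA sA1] unfolding A1_def by blast
  obtain \<psi> :: "'b \<Rightarrow> ('r \<times> 'm) list" where \<psi>: "inj_on \<psi> B1" "in_sigma M (transport (subm B B1) \<psi>)"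
    using small_image[OF lmM lmB f] unfolding B1_def by blast
  have A1A: "A1 \<subseteq> mcar A" and B1B: "B1 \<subseteq> mcar B"
    using submodD(1)[OF sA1] submodD(1)[OF sB1] .
  have f1: "hom M (subm B B1) f" using hom_subm_iff[OF B1B] f unfolding B1_def by blast
  have g1: "hom (subm A A1) (subm B B1) g"
    unfolding hom_subm_iff[OF B1B] using hom_from_subm[OF g A1A] unfolding A1_def by auto
  have "g ` A1 = B1" using aA1 a unfolding A1_def B1_def by force
  then obtain h where "hom M (subm A A1) h" "\<forall>m\<in>mcar M. g (h m) = f m"
    using proj_sigma_lift_transport[OF proj submod_lm[OF lmA sA1] submod_lm[OF lmB sB1] _ _ \<phi>(2) \<psi>(2) g1 _ f1]
      \<phi>(1) \<psi>(1) by auto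
  then show ?thesis using hom_subm_iff[OF A1A] by blast
qed

section \<open>\<open>M\<close>-ideals\<close>

lemma Mideal_submod:
  assumes lmM: "is_lmodule M" and I: "Mideal M P"
  shows "submod M P"
proof -
  obtain C :: "('a, 'b) lmodule set" where C: "\<forall>W\<in>C. is_lmodule W"
    and P: "P = {m \<in> mcar M. \<forall>W\<in>C. \<forall>f. hom M W f \<longrightarrow> f m = mzero W}"
    using I unfolding Mideal_def by blast
  have "f (mzero M) = mzero W" if "W \<in> C" "hom M W f" for W f
    using hom_zero[OF lmM _ that(2)] C that(1) by blast
  moreover have "f (madd M x y) = mzero W" if "x \<in> P" "y \<in> P" "W \<in> C" "hom M W f" for x y W f
  proof -
    have "x \<in> mcar M" "y \<in> mcar M" "f x = mzero W" "f y = mzero W" using that unfolding P by auto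
    then show ?thesis using homD(2)[OF that(4)] C that(3) by simp
  qed
  moreover have "f (msmult M r x) = mzero W" if "x \<in> P" "W \<in> C" "hom M W f" for r x W f
  proof -
    have "x \<in> mcar M" "f x = mzero W" using that unfolding P by auto
    then show ?thesis using homD(3)[OF that(3)] C that(2) by simp
  qed
  ultimately show ?thesis using lmM unfolding submod_def by (auto simp: P)
qed

lemma Mideal_invariant:
  assumes I: "Mideal M P" and k: "hom M M k" and p: "p \<in> P"
  shows "k p \<in> P"
proof -
  obtain C :: "('a, 'b) lmodule set"
    where P: "P = {m \<in> mcar M. \<forall>W\<in>C. \<forall>f. hom M W f \<longrightarrow> f m = mzero W}"
    using I unfolding Mideal_def by blast
  show ?thesis using p homD(1)[OF k] hom_comp[OF k] unfolding P by fastforce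
qed

section \<open>\<open>M\<close>-prime submodules and quotients\<close>

text \<open>If an epimorphism \<open>\<pi> : Y \<rightarrow> Z\<close> with \<open>Y \<in> \<sigma>[M]\<close> annihilates \<open>N\<cdot>Y\<close>, then \<open>N\<close> kills
  \<open>Z\<close>: every homomorphism \<open>M \<rightarrow> Z\<close> lifts to \<open>Y\<close>, and \<open>N\<cdot>Y\<close> contains the images of
  \<open>N\<close> under homomorphisms \<open>M \<rightarrow> Y\<close>.  This is where projectivity is used.\<close>
lemma kills_of_epi:
  fixes M :: "('r::{ring,monoid_mult}, 'm) lmodule" and Y :: "('r, 'y) lmodule"
    and Z :: "('r, 'z) lmodule"
  assumes lmM: "is_lmodule M" and proj: "proj_sigma M"
    and lmY: "is_lmodule Y" and sig: "in_sigma M Y" and lmZ: "is_lmodule Z"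
    and \<pi>: "hom Y Z \<pi>" and onto: "mcar Z \<subseteq> \<pi> ` mcar Y" and NM: "N \<subseteq> mcar M"
    and ker: "\<And>y. y \<in> mprod M N Y \<Longrightarrow> \<pi> y = mzero Z"
  shows "kills M N Z"
  unfolding kills_def
proof (intro allI impI ballI)
  fix k n assume k: "hom M Z k" and n: "n \<in> N"
  have "k ` mcar M \<subseteq> \<pi> ` mcar Y" using homD(1)[OF k] onto by blast
  then obtain h where h: "hom M Y h" "\<forall>m\<in>mcar M. \<pi> (h m) = k m"
    using lift[OF lmM proj lmY sig lmZ \<pi> k] by blast
  have nM: "n \<in> mcar M" using n NM by blast
  have "\<pi> (h n) = mzero Z" using ker[OF mprod_fun[OF h(1) nM n]] .
  then show "k n = mzero Z" using h(2) nM by simp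
qed

lemma quot_kills_image:
  fixes M :: "('r::{ring,monoid_mult}, 'm) lmodule" and X :: "('r, 'x) lmodule"
  assumes lmM: "is_lmodule M" and proj: "proj_sigma M"
    and lmX: "is_lmodule X" and sig: "in_sigma M X" and sP: "submod X P"
    and sY: "submod X Y" and NM: "N \<subseteq> mcar M" and NY: "mprod M N (subm X Y) \<subseteq> P"
  shows "kills M N (subm (quot X P) (coset X P ` Y))"
proof -
  have lmQ: "is_lmodule (quot X P)" using quot_lm[OF lmX sP] .
  have sYb: "submod (quot X P) (coset X P ` Y)"
    using hom_image_submod[OF lmX lmQ quot_hom[OF lmX sP] sY] .
  have YX: "Y \<subseteq> mcar X" using submodD(1)[OF sY] .
  show ?thesis
  proof (rule kills_of_epi[OF lmM proj submod_lm[OF lmX sY] in_sigma_subm[OF sig sY]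
        submod_lm[OF lmQ sYb] _ _ NM])
    show "hom (subm X Y) (subm (quot X P) (coset X P ` Y)) (coset X P)"
      unfolding hom_subm_iff[OF submodD(1)[OF sYb]]
      using hom_from_subm[OF quot_hom[OF lmX sP] YX] by simp
    fix y assume y: "y \<in> mprod M N (subm X Y)"
    then have "y \<in> P" "y \<in> mcar X" using NY subsetD[OF mprod_sub y] YX by auto
    then show "coset X P y = mzero (subm (quot X P) (coset X P ` Y))"
      using coset_zero[OF lmX sP] quot_zero[OF lmX sP] by simp
  qed simp
qed

lemma quot_mprod_preimage:
  fixes M :: "('r::{ring,monoid_mult}, 'm) lmodule" and X :: "('r, 'x) lmodule"
  assumes lmX: "is_lmodule X" and sP: "submod X P" and sY: "submod X Y"
    and sW: "submod (quot X P) W" and YW: "coset X P ` Y \<subseteq> W"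
    and kill: "kills M N (subm (quot X P) W)" and NM: "N \<subseteq> mcar M"
  shows "mprod M N (subm X Y) \<subseteq> P"
proof
  fix y assume y: "y \<in> mprod M N (subm X Y)"
  have lmQ: "is_lmodule (quot X P)" using quot_lm[OF lmX sP] .
  have WQ: "W \<subseteq> mcar (quot X P)" and YX: "Y \<subseteq> mcar X" using submodD(1)[OF sW] submodD(1)[OF sY] .
  have \<pi>: "hom (subm X Y) (subm (quot X P) W) (coset X P)"
    unfolding hom_subm_iff[OF WQ] using hom_from_subm[OF quot_hom[OF lmX sP] YX] YW by auto
  have inj: "inj_on (\<lambda>c. SOME a. a \<in> c) (coset X P ` mcar (subm X Y))"
    using inj_on_subset[OF quot_rep_inj[OF lmX sP]] YW WQ by auto
  have "coset X P y = P"
    using mprod_kernel[OF submod_lm[OF lmX sY] submod_lm[OF lmQ sW] NM kill \<pi> inj y]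
      quot_zero[OF lmX sP] by simp
  moreover have "y \<in> mcar X" using subsetD[OF mprod_sub y] YX by auto
  ultimately show "y \<in> P" using coset_zero[OF lmX sP] by blast
qed

lemma Mprime_module_quot_iff:
  assumes lmX: "is_lmodule X" and sP: "submod X P" and PX: "P \<noteq> mcar X"
  shows "Mprime_module M (quot X P) \<longleftrightarrow>
    (\<forall>N W. submod M N \<longrightarrow> submod (quot X P) W \<longrightarrow> mprod M N (subm (quot X P) W) \<subseteq> {P} \<longrightarrow>
       mprod M N (quot X P) \<subseteq> {P} \<or> W \<subseteq> {P})"
proof -
  have lmQ: "is_lmodule (quot X P)" using quot_lm[OF lmX sP] .
  have "submod (quot X P) {P}"
    using lm_zero[OF lmQ] lm_lzero[OF lmQ] lm_smult0[OF lmQ] unfolding quot_zero[OF lmX sP] submod_def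
    by auto
  then show ?thesis
    unfolding Mprime_module_def Mprime_sub_def quot_zero[OF lmX sP] using quot_ne[OF lmX sP PX] by auto
qed

text \<open>A submodule \<open>W\<close> of \<open>X/P\<close> with \<open>N\<cdot>W = 0\<close> is pulled back to
  \<open>Y \<le> X\<close> with \<open>N\<cdot>Y \<subseteq> P\<close>; primeness of \<open>P\<close> gives \<open>N\<cdot>X \<subseteq> P\<close>, whence \<open>N\<cdot>(X/P) = 0\<close>,
  or \<open>Y \<subseteq> P\<close>, whence \<open>W = 0\<close>.\<close>
lemma Mprime_quot:
  fixes M :: "('r::{ring,monoid_mult}, 'm) lmodule" and X :: "('r, 'x) lmodule"
  assumes lmM: "is_lmodule M" and proj: "proj_sigma M"
    and lmX: "is_lmodule X" and sig: "in_sigma M X" and pr: "Mprime_sub M X P"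
  shows "Mprime_module M (quot X P)"
proof -
  have sP: "submod X P" and PX: "P \<noteq> mcar X" using pr unfolding Mprime_sub_def by auto
  have lmQ: "is_lmodule (quot X P)" using quot_lm[OF lmX sP] .
  show ?thesis unfolding Mprime_module_quot_iff[OF lmX sP PX]
  proof (intro allI impI)
    fix N W assume sN: "submod M N" and sW: "submod (quot X P) W"
      and NW: "mprod M N (subm (quot X P) W) \<subseteq> {P}"
    have NM: "N \<subseteq> mcar M" using submodD(1)[OF sN] .
    define Y where "Y = {x \<in> mcar X. coset X P x \<in> W}"
    have sY: "submod X Y" unfolding Y_def
      using hom_preimage_submod[OF lmX lmQ quot_hom[OF lmX sP] sW] .
    have "kills M N (subm (quot X P) W)"
      by (rule kills_of_mprod[OF _ NM]) (use NW quot_zero[OF lmX sP] in simp)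
    then have "mprod M N (subm X Y) \<subseteq> P"
      using quot_mprod_preimage[OF lmX sP sY sW _ _ NM] unfolding Y_def by blast
    then have "mprod M N X \<subseteq> P \<or> Y \<subseteq> P"
      by (rule pr[unfolded Mprime_sub_def, THEN conjunct2, THEN conjunct2, rule_format, OF sN sY])
    then show "mprod M N (quot X P) \<subseteq> {P} \<or> W \<subseteq> {P}"
    proof
      assume "mprod M N X \<subseteq> P"
      then have "kills M N (subm (quot X P) (coset X P ` mcar X))"
        using quot_kills_image[OF lmM proj lmX sig sP submod_full[OF lmX] NM] by simp
      then have "kills M N (quot X P)" by (simp flip: quot_car[OF lmX sP])
      then show ?thesis using mprod_of_kills[OF _ lmQ] quot_zero[OF lmX sP] by auto
    next
      assume YP: "Y \<subseteq> P"
      have "W \<subseteq> coset X P ` Y"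
        using submodD(1)[OF sW] unfolding quot_car[OF lmX sP] Y_def by blast
      then show ?thesis using YP coset_zero[OF lmX sP] submodD(1)[OF sP] by blast
    qed
  qed
qed

text \<open>For \<open>N\<cdot>Y \<subseteq> P\<close>, \<open>N\<close> kills the image of \<open>Y\<close> in \<open>X/P\<close>, so
  either it is zero, i.e. \<open>Y \<subseteq> P\<close>, or \<open>N\<close> kills all of \<open>X/P\<close>, i.e. \<open>N\<cdot>X \<subseteq> P\<close>.\<close>
lemma Mprime_of_quot:
  fixes M :: "('r::{ring,monoid_mult}, 'm) lmodule" and X :: "('r, 'x) lmodule"
  assumes lmM: "is_lmodule M" and proj: "proj_sigma M"
    and lmX: "is_lmodule X" and sig: "in_sigma M X" and sP: "submod X P" and PX: "P \<noteq> mcar X"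
    and pr: "Mprime_module M (quot X P)"
  shows "Mprime_sub M X P"
  unfolding Mprime_sub_def
proof (intro conjI sP PX allI impI)
  fix N Y assume sN: "submod M N" and sY: "submod X Y" and NY: "mprod M N (subm X Y) \<subseteq> P"
  have NM: "N \<subseteq> mcar M" using submodD(1)[OF sN] .
  have lmQ: "is_lmodule (quot X P)" using quot_lm[OF lmX sP] .
  let ?W = "coset X P ` Y"
  have sW: "submod (quot X P) ?W" using hom_image_submod[OF lmX lmQ quot_hom[OF lmX sP] sY] .
  have "kills M N (subm (quot X P) ?W)"
    using quot_kills_image[OF lmM proj lmX sig sP sY NM NY] .
  then have "mprod M N (subm (quot X P) ?W) \<subseteq> {P}"
    using mprod_of_kills[OF _ submod_lm[OF lmQ sW]] quot_zero[OF lmX sP] by simp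
  then have "mprod M N (quot X P) \<subseteq> {P} \<or> ?W \<subseteq> {P}"
    by (rule pr[unfolded Mprime_module_quot_iff[OF lmX sP PX], rule_format, OF sN sW])
  then show "mprod M N X \<subseteq> P \<or> Y \<subseteq> P"
  proof
    assume "mprod M N (quot X P) \<subseteq> {P}"
    then have "kills M N (subm (quot X P) (mcar (quot X P)))"
      by (intro kills_of_mprod[OF _ NM]) (simp add: quot_zero[OF lmX sP])
    then have "mprod M N (subm X (mcar X)) \<subseteq> P"
      using quot_mprod_preimage[OF lmX sP submod_full[OF lmX] submod_full[OF lmQ]] NM
      by (simp add: quot_car[OF lmX sP])
    then show ?thesis by simp
  next
    assume W0: "?W \<subseteq> {P}"
    have "y \<in> P" if y: "y \<in> Y" for y
      using W0 y coset_zero[OF lmX sP, of y] submodD(1)[OF sY] by auto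
    then show ?thesis by blast
  qed
qed

section \<open>Prime \<open>M\<close>-ideals\<close>

text \<open>If \<open>N\<cdot>Y \<subseteq> Ann\<^sub>M(X)\<close> and \<open>f(Y) \<noteq> 0\<close> for some \<open>f : M \<rightarrow> X\<close>, then \<open>N\<close> kills
  \<open>f(Y)\<close>, so primeness of \<open>X\<close> makes \<open>N\<close> kill \<open>X\<close>, and then every \<open>f : M \<rightarrow> X\<close> vanishes
  on \<open>N\<cdot>M\<close>.\<close>
lemma Mprime_sub_Ann:
  fixes M :: "('r::{ring,monoid_mult}, 'm) lmodule" and X :: "('r, 'x) lmodule"
  assumes lmM: "is_lmodule M" and proj: "proj_sigma M"
    and lmX: "is_lmodule X" and prX: "Mprime_module M X"
    and sP: "submod M P" and PM: "P \<noteq> mcar M" and P: "P = Ann M X"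
  shows "Mprime_sub M M P"
  unfolding Mprime_sub_def
proof (intro conjI sP PM allI impI)
  fix N Y assume sN: "submod M N" and sY: "submod M Y" and NY: "mprod M N (subm M Y) \<subseteq> P"
  have NM: "N \<subseteq> mcar M" and YM: "Y \<subseteq> mcar M" using submodD(1)[OF sN] submodD(1)[OF sY] .
  show "mprod M N M \<subseteq> P \<or> Y \<subseteq> P"
  proof (rule disjCI)
    assume "\<not> Y \<subseteq> P"
    then obtain y f where y: "y \<in> Y" and f: "hom M X f" "f y \<noteq> mzero X"
      using YM unfolding P Ann_def by blast
    let ?S = "f ` Y"
    have sS: "submod X ?S" using hom_image_submod[OF lmM lmX f(1) sY] .
    have "kills M N (subm X ?S)"
    proof (rule kills_of_epi[OF lmM proj submod_lm[OF lmM sY] in_sigma_subm[OF in_sigma_self[OF lmM] sY]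
          submod_lm[OF lmX sS] _ _ NM])
      show "hom (subm M Y) (subm X ?S) f"
        unfolding hom_subm_iff[OF submodD(1)[OF sS]] using hom_from_subm[OF f(1) YM] by simp
      fix z assume "z \<in> mprod M N (subm M Y)"
      then show "f z = mzero (subm X ?S)" using NY f(1) unfolding P Ann_def by auto
    qed simp
    then have "mprod M N (subm X ?S) \<subseteq> {mzero X}"
      using mprod_of_kills[OF _ submod_lm[OF lmX sS]] by simp
    then have "mprod M N X \<subseteq> {mzero X} \<or> ?S \<subseteq> {mzero X}"
      by (rule prX[unfolded Mprime_module_def Mprime_sub_def, THEN conjunct2, THEN conjunct2,
            THEN conjunct2, rule_format, OF sN sS])
    then have killX: "kills M N X" using f y kills_of_mprod[OF _ NM] by blast
    show "mprod M N M \<subseteq> P"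
    proof
      fix x assume x: "x \<in> mprod M N M"
      have "g x = mzero X" if g: "hom M X g" for g
        using mprod_kernel[OF lmM lmX NM killX g inj_on_inv_into[OF subset_refl] x] .
      then show "x \<in> P" using subsetD[OF mprod_sub x] unfolding P Ann_def by blast
    qed
  qed
qed

text \<open>By projectivity, an \<open>M\<close>-ideal is the annihilator of its quotient: a homomorphism
  \<open>M \<rightarrow> M/P\<close> lifts to an endomorphism of \<open>M\<close>, and these preserve \<open>P\<close>.\<close>
lemma Ann_quot_Mideal:
  assumes lmM: "is_lmodule M" and proj: "proj_sigma M" and I: "Mideal M P"
  shows "Ann M (quot M P) = P"
proof
  have sP: "submod M P" using Mideal_submod[OF lmM I] .
  have lmQ: "is_lmodule (quot M P)" using quot_lm[OF lmM sP] .
  show "Ann M (quot M P) \<subseteq> P"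
    using coset_zero[OF lmM sP] quot_hom[OF lmM sP] quot_zero[OF lmM sP] unfolding Ann_def by auto
  show "P \<subseteq> Ann M (quot M P)"
  proof
    fix p assume p: "p \<in> P"
    have pM: "p \<in> mcar M" using p submodD(1)[OF sP] by blast
    have "f p = P" if f: "hom M (quot M P) f" for f
    proof -
      have "f ` mcar M \<subseteq> coset M P ` mcar M" using homD(1)[OF f] quot_car[OF lmM sP] by blast
      then obtain h where h: "hom M M h" "\<forall>m\<in>mcar M. coset M P (h m) = f m"
        using lift[OF lmM proj lmM in_sigma_self[OF lmM] lmQ quot_hom[OF lmM sP] f] by blast
      have "h p \<in> P" using Mideal_invariant[OF I h(1) p] .
      then show "f p = P" using h(2) pM coset_zero[OF lmM sP] homD(1)[OF h(1) pM] by auto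
    qed
    then show "p \<in> Ann M (quot M P)" using pM quot_zero[OF lmM sP] unfolding Ann_def by auto
  qed
qed

theorem proposition2p10:
  fixes M :: "('r::{ring,monoid_mult}, 'm) lmodule"
    and X :: "('r, 'x) lmodule"
  assumes "is_lmodule M" and "proj_sigma M"
    and "is_lmodule X" and "in_sigma M X"
  shows "(\<forall>P. Mprime_sub M X P \<longrightarrow> Mprime_module M (quot X P)) \<and>
         (\<forall>P. Mideal M P \<and> P \<noteq> mcar M \<longrightarrow>
            ((prime_Mideal TYPE('y) M P \<longrightarrow> Mprime_sub M M P) \<and>
             (Mprime_sub M M P \<longleftrightarrow> Mprime_module M (quot M P)) \<and>
             (Mprime_module M (quot M P) \<longrightarrow> prime_Mideal TYPE('m set) M P)))"
proof (intro conjI allI impI iffI; (elim conjE)?)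
  note lmM = assms(1) and proj = assms(2) and sigM = in_sigma_self[OF assms(1)]
  show "Mprime_module M (quot X P)" if "Mprime_sub M X P" for P
    using Mprime_quot[OF assms that] .
  fix P assume I: "Mideal M P" and PM: "P \<noteq> mcar M"
  have sP: "submod M P" using Mideal_submod[OF lmM I] .
  show "Mprime_sub M M P" if "prime_Mideal TYPE('y) M P"
    using that Mprime_sub_Ann[OF lmM proj _ _ sP PM] unfolding prime_Mideal_def by blast
  show "Mprime_module M (quot M P)" if "Mprime_sub M M P"
    using Mprime_quot[OF lmM proj lmM sigM that] .
  show "Mprime_sub M M P" if "Mprime_module M (quot M P)"
    using Mprime_of_quot[OF lmM proj lmM sigM sP PM that] .
  show "prime_Mideal TYPE('m set) M P" if "Mprime_module M (quot M P)"
    unfolding prime_Mideal_def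
    using I PM quot_lm[OF lmM sP] that Ann_quot_Mideal[OF lmM proj I] by blast
qed

end
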